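(* Let $\tau\in\mathbb{C}$ with $\operatorname{Im}(\tau)>0$ and $|\tau|=1$, and let $\Gamma=\{m+n\tau:m,n\in\mathbb{Z}\}$. Let $I$ be an antiholomorphic involution of $\mathbb{C}/\Gamma$ induced by $z\mapsto a\bar z+b$ with $a,b\in\mathbb{C}$ and $a\notin\{1,-1\}$. Then $I$ has a fixpoint.
   Context: An antiholomorphic involution is an antiholomorphic map $I$ with $I\circ I=\mathrm{id}$. *)

theory Defs
  imports Complex_Main
begin

definition lattice :: "complex \<Rightarrow> complex set" where
  "lattice \<tau> = {of_int m + of_int n * \<tau> | m n :: int. True}"

definition antilin :: "complex \<Rightarrow> complex \<Rightarrow> complex \<Rightarrow> complex" where
  "antilin a b z = a * cnj z + b"

end

theory Submission
  imports Defs
begin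

text \<open>
  Write \<sigma> z = a * cnj z. The involution hypothesis forces cmod a = 1 and
  c = a * cnj b + b \<in> \<Gamma>, and then \<sigma> c = c. A point z is fixed modulo \<Gamma>
  as soon as c = \<gamma> + \<sigma> \<gamma> for some \<gamma> \<in> \<Gamma>: take z = (b - \<gamma>) / 2.
  Since \<sigma> maps \<Gamma> into itself, a = p + s \<tau> and a * cnj \<tau> = q - p \<tau> with
  integers p, q, s, and cmod a = 1 gives p^2 + q s = 1. Here s \<noteq> 0 because
  a \<noteq> \<plusminus>1, and cmod a = 1 together with \<bar>Re \<tau>\<bar> < 1 forces p = 0 or
  \<bar>p\<bar> = \<bar>s\<bar>; either way s divides 1. With s = \<plusminus>1 the required \<gamma> is an integer.
\<close>

lemma mem_lattice_iff: "z \<in> lattice \<tau> \<longleftrightarrow> (\<exists>m n :: int. z = of_int m + of_int n * \<tau>)"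
  by (auto simp: lattice_def)

lemma of_int_mem_lattice: "of_int m \<in> lattice \<tau>"
  unfolding mem_lattice_iff by (rule exI[of _ m], rule exI[of _ 0]) simp

lemma generator_mem_lattice: "\<tau> \<in> lattice \<tau>"
  unfolding mem_lattice_iff by (rule exI[of _ 0], rule exI[of _ 1]) simp

lemma lattice_diff: "z \<in> lattice \<tau> \<Longrightarrow> w \<in> lattice \<tau> \<Longrightarrow> z - w \<in> lattice \<tau>"
proof -
  assume "z \<in> lattice \<tau>" "w \<in> lattice \<tau>"
  then obtain m n m' n' :: int
    where "z = of_int m + of_int n * \<tau>" "w = of_int m' + of_int n' * \<tau>"
    by (auto simp: mem_lattice_iff)
  then have "z - w = of_int (m - m') + of_int (n - n') * \<tau>"
    by (simp add: algebra_simps)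
  then show ?thesis
    unfolding mem_lattice_iff by blast
qed

lemma half_not_mem_lattice:
  assumes "Im \<tau> \<noteq> 0"
  shows "1 / 2 \<notin> lattice \<tau>"
proof
  assume "1 / 2 \<in> lattice \<tau>"
  then obtain m n :: int where half: "1 / 2 = of_int m + of_int n * \<tau>"
    by (auto simp: mem_lattice_iff)
  from arg_cong[OF half, of Im] have "n = 0"
    using assms by simp
  with arg_cong[OF half, of Re] have "(1 :: real) = 2 * of_int m"
    by simp
  then have "(1 :: int) = 2 * m"
    by linarith
  then show False
    by presburger
qed

lemma antilin_antilin: "antilin a b (antilin a b z) = a * cnj a * z + (a * cnj b + b)"
  by (simp add: antilin_def algebra_simps)

lemma antilin_involution_mod_lattice:
  assumes "Im \<tau> \<noteq> 0" and involution: "\<forall>z. antilin a b (antilin a b z) - z \<in> lattice \<tau>"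
  shows "a * cnj a = 1" and "a * cnj b + b \<in> lattice \<tau>"
proof -
  define c where "c = a * cnj b + b"
  show c_mem: "a * cnj b + b \<in> lattice \<tau>"
    using involution[rule_format, of 0] by (simp add: antilin_antilin)
  show "a * cnj a = 1"
  proof (rule ccontr)
    assume "a * cnj a \<noteq> 1"
    define z where "z = (1 / 2) / (a * cnj a - 1)"
    have "(a * cnj a - 1) * z = 1 / 2"
      using \<open>a * cnj a \<noteq> 1\<close> by (simp add: z_def)
    then have "antilin a b (antilin a b z) - z - c = 1 / 2"
      by (simp add: antilin_antilin c_def algebra_simps)
    moreover have "antilin a b (antilin a b z) - z - c \<in> lattice \<tau>"
      using involution c_mem by (simp add: c_def lattice_diff)
    ultimately show False
      using half_not_mem_lattice[OF assms(1)] by metis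
  qed
qed

lemma antilin_descends_lattice:
  assumes "\<forall>z w. z - w \<in> lattice \<tau> \<longrightarrow> antilin a b z - antilin a b w \<in> lattice \<tau>"
  shows "a \<in> lattice \<tau>" and "a * cnj \<tau> \<in> lattice \<tau>"
  using assms[rule_format, of 1 0] assms[rule_format, of \<tau> 0]
    of_int_mem_lattice[of 1] generator_mem_lattice[of \<tau>]
  by (simp_all add: antilin_def)

lemma cmod_lattice_point_square:
  fixes \<tau> :: complex and p s :: int
  assumes "cmod \<tau> = 1"
  shows "(cmod (of_int p + of_int s * \<tau>))\<^sup>2 = p\<^sup>2 + s\<^sup>2 + 2 * p * s * Re \<tau>"
proof -
  have "(Re \<tau>)\<^sup>2 + (Im \<tau>)\<^sup>2 = 1"
    using assms by (simp add: cmod_def)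
  moreover have "(cmod (of_int p + of_int s * \<tau>))\<^sup>2
      = p\<^sup>2 + s\<^sup>2 + 2 * p * s * Re \<tau> + s\<^sup>2 * ((Re \<tau>)\<^sup>2 + (Im \<tau>)\<^sup>2 - 1)"
    unfolding cmod_power2 by (simp add: power2_eq_square algebra_simps)
  ultimately show ?thesis
    by simp
qed

lemma unit_lattice_point_abs_coeffs:
  fixes \<tau> :: complex and p s :: int
  assumes "cmod \<tau> = 1" "Im \<tau> \<noteq> 0" "cmod (of_int p + of_int s * \<tau>) = 1" "p \<noteq> 0" "s \<noteq> 0"
  shows "p\<^sup>2 = s\<^sup>2"
proof -
  define r where "r = Re \<tau>"
  have "r\<^sup>2 + (Im \<tau>)\<^sup>2 = 1"
    using assms(1) by (simp add: r_def cmod_def)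
  moreover have "(Im \<tau>)\<^sup>2 > 0"
    using assms(2) by simp
  ultimately have "r\<^sup>2 < 1"
    by linarith
  then have "\<bar>r\<bar> < 1"
    by (simp only: abs_square_less_1)
  have norm: "p\<^sup>2 + s\<^sup>2 + 2 * p * s * r = 1"
    using cmod_lattice_point_square[OF assms(1), of p s] assms(3) by (simp add: r_def)
  have "- (2 * p * s * r) < 2 * \<bar>p\<bar> * \<bar>s\<bar>"
  proof -
    have "\<bar>2 * p * s * r\<bar> = 2 * \<bar>p\<bar> * \<bar>s\<bar> * \<bar>r\<bar>"
      by (simp add: abs_mult)
    also have "\<dots> < 2 * \<bar>p\<bar> * \<bar>s\<bar>"
      using \<open>\<bar>r\<bar> < 1\<close> assms(4,5) by simp
    finally show ?thesis
      by linarith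
  qed
  with norm have "real_of_int ((\<bar>p\<bar> - \<bar>s\<bar>)\<^sup>2) < 1"
    by (simp add: power2_eq_square algebra_simps)
  then have "(\<bar>p\<bar> - \<bar>s\<bar>)\<^sup>2 < 1"
    by linarith
  then have "\<bar>\<bar>p\<bar> - \<bar>s\<bar>\<bar> < 1"
    by (simp only: abs_square_less_1)
  then have "\<bar>p\<bar> = \<bar>s\<bar>"
    by linarith
  then show ?thesis
    by (metis power2_abs)
qed

lemma unit_lattice_point_tau_coeff_square:
  fixes \<tau> :: complex and p s :: int
  defines "a \<equiv> of_int p + of_int s * \<tau>"
  assumes "cmod \<tau> = 1" "Im \<tau> \<noteq> 0" "cmod a = 1" "a * cnj \<tau> \<in> lattice \<tau>"
    and "a \<noteq> 1" "a \<noteq> -1"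
  shows "s\<^sup>2 = 1"
proof -
  have "s \<noteq> 0"
  proof
    assume "s = 0"
    then have "\<bar>p\<bar> = 1"
      using assms(4) by (simp add: a_def)
    then show False
      using assms(6,7) \<open>s = 0\<close> by (auto simp: a_def abs_if split: if_splits)
  qed
  obtain q w :: int where q: "a * cnj \<tau> = of_int q + of_int w * \<tau>"
    using assms(5) by (auto simp: mem_lattice_iff)
  have "\<tau> * cnj \<tau> = 1"
    using complex_norm_square[of \<tau>] assms(2) by simp
  then have "a * cnj \<tau> = of_int p * cnj \<tau> + of_int s"
    by (simp add: a_def algebra_simps)
  with q have coords: "of_int q + of_int w * \<tau> = of_int p * cnj \<tau> + of_int s"
    by simp
  from arg_cong[OF coords, of Im]
  have "Im \<tau> * of_int (w + p) = 0"
    by (simp add: algebra_simps)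
  then have "w = - p"
    using assms(3) by simp
  with arg_cong[OF coords, of Re]
  have "real_of_int q = 2 * p * Re \<tau> + s"
    by simp
  moreover have "p\<^sup>2 + s\<^sup>2 + 2 * p * s * Re \<tau> = 1"
    using cmod_lattice_point_square[OF assms(2), of p s] assms(4) by (simp add: a_def)
  ultimately have "real_of_int (p\<^sup>2 + q * s) = 1"
    by (simp add: power2_eq_square algebra_simps)
  then have pqs: "p\<^sup>2 + q * s = 1"
    by linarith
  have "s dvd p\<^sup>2"
    using unit_lattice_point_abs_coeffs[OF assms(2,3) assms(4)[unfolded a_def] _ \<open>s \<noteq> 0\<close>]
    by (cases "p = 0") (simp_all add: power2_eq_square)
  then have "s dvd 1"
    by (metis pqs dvd_add dvd_triv_right)
  then have "\<bar>s\<bar> = 1"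
    by simp
  then show ?thesis
    by (metis power2_abs one_power2)
qed

lemma fixed_lattice_point_is_trace:
  fixes \<tau> c :: complex and p s :: int
  defines "a \<equiv> of_int p + of_int s * \<tau>"
  assumes "Im \<tau> \<noteq> 0" "s\<^sup>2 = 1" "c \<in> lattice \<tau>" "a * cnj c = c"
  shows "\<exists>\<gamma> \<in> lattice \<tau>. \<gamma> + a * cnj \<gamma> = c"
proof -
  obtain x y :: int where c: "c = of_int x + of_int y * \<tau>"
    using assms(4) by (auto simp: mem_lattice_iff)
  from arg_cong[OF assms(5), of Im]
  have "Im \<tau> * of_int (s * x) = Im \<tau> * of_int ((1 + p) * y)"
    by (simp add: a_def c algebra_simps)
  then have "s * x = (1 + p) * y"
    using assms(2) by (simp flip: of_int_mult)
  then have "s * y * (1 + p) = x"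
    using assms(3) by (metis mult.assoc mult.commute mult.left_neutral power2_eq_square)
  have "of_int (s * y) + a * cnj (of_int (s * y)) = of_int (s * y * (1 + p)) + of_int (s * s * y) * \<tau>"
    by (simp add: a_def algebra_simps)
  also have "\<dots> = c"
    using \<open>s * y * (1 + p) = x\<close> assms(3) by (simp add: c power2_eq_square)
  finally show ?thesis
    using of_int_mem_lattice by blast
qed

lemma antilin_shifted_half:
  assumes "\<gamma> + a * cnj \<gamma> = a * cnj b + b"
  shows "antilin a b ((b - \<gamma>) / 2) - (b - \<gamma>) / 2 = \<gamma>"
proof -
  have "antilin a b ((b - \<gamma>) / 2) - (b - \<gamma>) / 2 = (a * cnj b + b - a * cnj \<gamma> + \<gamma>) / 2"
    by (simp add: antilin_def field_simps)
  also have "\<dots> = \<gamma>"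
    using assms by (simp add: field_simps)
  finally show ?thesis .
qed

theorem lemma2p7:
  fixes \<tau> a b :: complex
  assumes "Im \<tau> > 0" and "cmod \<tau> = 1"
    and descends: "\<forall>z w. z - w \<in> lattice \<tau> \<longrightarrow> antilin a b z - antilin a b w \<in> lattice \<tau>"
    and involution: "\<forall>z. antilin a b (antilin a b z) - z \<in> lattice \<tau>"
    and "a \<noteq> 1" and "a \<noteq> -1"
  shows "\<exists>z. antilin a b z - z \<in> lattice \<tau>"
proof -
  have Im\<tau>: "Im \<tau> \<noteq> 0"
    using assms(1) by simp
  note unit = antilin_involution_mod_lattice[OF Im\<tau> involution]
  obtain p s :: int where a: "a = of_int p + of_int s * \<tau>"
    using antilin_descends_lattice(1)[OF descends] by (auto simp: mem_lattice_iff)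
  have "cmod a = 1"
    using unit(1) by (metis abs_norm_cancel abs_square_eq_1 complex_norm_square of_real_eq_1_iff)
  then have "s\<^sup>2 = 1"
    using unit_lattice_point_tau_coeff_square[OF assms(2) Im\<tau>, of p s] a
      antilin_descends_lattice(2)[OF descends] assms(5,6)
    by simp
  moreover have "a * cnj (a * cnj b + b) = a * cnj b + b"
    using unit(1) by (simp add: algebra_simps)
  ultimately obtain \<gamma> where "\<gamma> \<in> lattice \<tau>" "\<gamma> + a * cnj \<gamma> = a * cnj b + b"
    using fixed_lattice_point_is_trace[OF Im\<tau> _ unit(2)] a by blast
  then show ?thesis
    using antilin_shifted_half by metis
qed

end
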